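(* Let $k \geq 3$ be an integer and let $A_k$ be a set of positive integers that contains no $k$-term geometric progression. Then \[ d_U(A_k) \leq 1 - \frac{1}{2^k -1} - \frac{2}{5}\left( \frac{1}{5^{k-1} } - \frac{1}{6^{k-1}} \right) - \frac{4}{15}\left( \frac{1}{7^{k-1} } - \frac{1}{10^{k-1}} \right). \]
   Context: A geometric progression of length $k$ with common ratio $r$, where $r \neq 0, \pm 1$ is a real number, is a sequence $(a_0, a_1, \ldots, a_{k-1})$ of nonzero real numbers with $a_i/a_{i-1} = r$ for $i = 1, \ldots, k-1$. A $k$-term geometric progression is a geometric progression of length $k$ with some common ratio $r$. A set contains no $k$-term geometric progression if it does not contain numbers $a_0, \ldots, a_{k-1}$ such that $(a_0, \ldots, a_{k-1})$ is a $k$-term geometric progression. For a set $A$ of positive integers, $A(n)$ denotes the number of $a \in A$ with $a \leq n$, and the upper asymptotic density is $d_U(A) = \limsup_{n \to \infty} A(n)/n$. *)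

theory Defs
  imports "HOL-Analysis.Analysis" "HOL-Library.Liminf_Limsup"
begin

definition geom_prog :: "nat \<Rightarrow> real \<Rightarrow> (nat \<Rightarrow> real) \<Rightarrow> bool" where
  "geom_prog k r a \<longleftrightarrow> r \<noteq> 0 \<and> r \<noteq> 1 \<and> r \<noteq> -1 \<and>
     (\<forall>i<k. a i \<noteq> 0) \<and> (\<forall>i. 1 \<le> i \<and> i < k \<longrightarrow> a i / a (i - 1) = r)"

definition no_k_GP :: "nat \<Rightarrow> nat set \<Rightarrow> bool" where
  "no_k_GP k A \<longleftrightarrow> \<not> (\<exists>r a. geom_prog k r a \<and> (\<forall>i<k. \<exists>m\<in>A. a i = real m))"

definition counting :: "nat set \<Rightarrow> nat \<Rightarrow> nat" where
  "counting A n = card {a \<in> A. a \<le> n}"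

definition upper_density :: "nat set \<Rightarrow> ereal" where
  "upper_density A = limsup (\<lambda>n. ereal (real (counting A n) / real n))"

end

theory Submission
  imports Defs "HOL-Number_Theory.Totient"
begin

text \<open>Let P = 2^k. For every n the interval (n/P, n] contains many pairwise disjoint k-term
  geometric progressions: m, 2m, ..., 2^(k-1) m for n/2^k < m \<le> n/2^(k-1); m 3^(k-1), ..., m 5^(k-1)
  for m coprime to 10 with n/6^(k-1) < m \<le> n/5^(k-1); and m 5^(k-1), ..., m 7^(k-1) for m coprime
  to 30 with n/10^(k-1) < m \<le> n/7^(k-1). They are separated by parity, by divisibility by 3 and by
  the exponent of 5. Each of them misses A, so A(n) \<le> A(n/P) + (1 - 2/P - E) n + O(1), where E n
  approximately counts the progressions with odd ratio, and iterating this recursion bounds the upper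
  density by (1 - 2/P - E) P/(P - 1) \<le> 1 - 1/(P - 1) - E.\<close>

section \<open>Counting integers coprime to q in an interval\<close>

lemma of_nat_div_ge: "real n / real d - 1 \<le> real (n div d)"
proof -
  have "real (n div d) = of_int \<lfloor>real n / real d\<rfloor>"
    by (simp add: floor_divide_of_nat_eq)
  then show ?thesis
    using real_of_int_floor_gt_diff_one[of "real n / real d"] by linarith
qed

lemma inj_on_mult_add_positive_digit:
  fixes q :: nat
  shows "inj_on (\<lambda>(t, r). q * t + r) (UNIV \<times> {1..q})"
proof (rule inj_onI, clarify)
  fix t r t' r' :: nat
  assume r: "r \<in> {1..q}" "r' \<in> {1..q}" and eq: "q * t + r = q * t' + r'"
  have digit: "(q * s + x - 1) div q = s" if "x \<in> {1..q}" for s x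
  proof -
    have "q * s + x - 1 = q * s + (x - 1)" "x - 1 < q"
      using that by auto
    then show ?thesis
      by simp
  qed
  have "t = t'"
    using digit[OF r(1), of t] digit[OF r(2), of t'] eq by simp
  then show "t = t' \<and> r = r'"
    using eq by simp
qed

lemma card_coprime_in_interval_ge:
  fixes q a b :: nat
  assumes "0 < q"
  shows "totient q * (b div q - a div q - 1) \<le> card {m. coprime m q \<and> a < m \<and> m \<le> b}"
proof -
  define J where "J = {a div q + 1..<b div q}"
  define f where "f = (\<lambda>(t, r). q * t + r)"
  have "inj_on f (J \<times> totatives q)"
    unfolding f_def by (rule inj_on_subset[OF inj_on_mult_add_positive_digit])
      (auto simp: in_totatives_iff)
  moreover have "f ` (J \<times> totatives q) \<subseteq> {m. coprime m q \<and> a < m \<and> m \<le> b}"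
  proof clarify
    fix t r assume t: "t \<in> J" and r: "r \<in> totatives q"
    have "0 < r" "r \<le> q" "coprime r q"
      using r by (auto simp: in_totatives_iff)
    have "coprime (q * t + r) q"
      using \<open>coprime r q\<close> assms
      by (metis coprime_mod_left_iff mod_mult_self3 mult.commute neq0_conv)
    moreover have "a < q * (a div q + 1)"
      using assms by (metis div_less_iff_less_mult less_add_one mult.commute)
    moreover have "a div q + 1 \<le> t" "t + 1 \<le> b div q"
      using t by (auto simp: J_def)
    then have "q * (a div q + 1) \<le> q * t" "q * (t + 1) \<le> b"
      by (meson le_trans mult_le_mono2 times_div_less_eq_dividend)+
    ultimately show "coprime (f (t, r)) q \<and> a < f (t, r) \<and> f (t, r) \<le> b"
      using \<open>0 < r\<close> \<open>r \<le> q\<close> by (auto simp: f_def)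
  qed
  moreover have "finite {m. coprime m q \<and> a < m \<and> m \<le> b}"
    by (rule finite_subset[of _ "{..b}"]) auto
  ultimately have "card (J \<times> totatives q) \<le> card {m. coprime m q \<and> a < m \<and> m \<le> b}"
    by (rule card_inj_on_le)
  then show ?thesis
    by (simp add: J_def card_cartesian_product totient_def mult.commute)
qed

definition coprime_window :: "nat \<Rightarrow> nat \<Rightarrow> nat \<Rightarrow> nat \<Rightarrow> nat set" where
  "coprime_window q c d n = {m. coprime m q \<and> n < c * m \<and> d * m \<le> n}"

lemma card_coprime_window_ge:
  fixes q c d n :: nat
  assumes "0 < q" "0 < c" "0 < d"
  shows "totient q / q * (real n / d - real n / c) - 3 * totient q
    \<le> card (coprime_window q c d n)"
proof -
  have window: "coprime_window q c d n = {m. coprime m q \<and> n div c < m \<and> m \<le> n div d}"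
    using assms(2,3)
    by (auto simp: coprime_window_def div_less_iff_less_mult less_eq_div_iff_mult_less_eq
        mult.commute)
  have "(real n / d - 1) / q \<le> real (n div d) / q"
    using of_nat_div_ge[of n d] by (simp add: divide_right_mono)
  moreover have "real (n div c) / q \<le> real n / c / q"
    by (intro divide_right_mono of_nat_div_le_of_nat) simp
  moreover have "(real n / d - real n / c) / q - 3 \<le> (real n / d - 1) / q - real n / c / q - 2"
    using assms(1) by (simp add: field_simps)
  ultimately have "(real n / d - real n / c) / q - 3 \<le> real (n div d) / q - real (n div c) / q - 2"
    by linarith
  also have "\<dots> \<le> real (n div d div q) - real (n div c div q) - 1"
    using of_nat_div_ge[of "n div d" q] of_nat_div_le_of_nat[of "n div c" q, where 'a = real]
    by linarith
  also have "\<dots> \<le> real (n div d div q - n div c div q - 1)"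
    by linarith
  finally have "real (totient q) * ((real n / d - real n / c) / q - 3)
      \<le> real (totient q * (n div d div q - n div c div q - 1))"
    by (simp add: mult_left_mono)
  moreover have "totient q / q * (real n / d - real n / c) - 3 * totient q
      = real (totient q) * ((real n / d - real n / c) / q - 3)"
    using assms(1) by (simp add: field_simps)
  ultimately have "totient q / q * (real n / d - real n / c) - 3 * totient q
      \<le> real (totient q * (n div d div q - n div c div q - 1))"
    by simp
  also have "\<dots> \<le> card (coprime_window q c d n)"
    unfolding window of_nat_le_iff by (rule card_coprime_in_interval_ge[OF assms(1)])
  finally show ?thesis .
qed

section \<open>Upper density from a dilation recursion\<close>

lemma counting_le: "counting A n \<le> n + 1"
  using card_mono[of "{..n}" "{a \<in> A. a \<le> n}"] by (auto simp: counting_def)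

lemma counting_div_split:
  "counting A n = counting A (n div d) + card (A \<inter> {n div d<..n})"
proof -
  have "{a \<in> A. a \<le> n} = {a \<in> A. a \<le> n div d} \<union> (A \<inter> {n div d<..n})"
    by (auto intro: le_trans[OF _ div_le_dividend])
  then show ?thesis
    unfolding counting_def by (subst card_Un_disjoint[symmetric]) auto
qed

lemma upper_density_le_if_counting_le_linear:
  assumes "\<And>n. real (counting A n) \<le> \<beta> * real n + K"
  shows "upper_density A \<le> ereal \<beta>"
proof -
  have "\<forall>\<^sub>F n in sequentially. ereal (real (counting A n) / real n) \<le> ereal (\<beta> + K / real n)"
  proof (rule eventually_sequentiallyI[of 1])
    fix n :: nat assume "1 \<le> n"
    then have "real (counting A n) / real n \<le> (\<beta> * real n + K) / real n"
      using assms[of n] by (intro divide_right_mono) auto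
    also have "\<dots> = \<beta> + K / real n"
      using \<open>1 \<le> n\<close> by (simp add: field_simps)
    finally show "ereal (real (counting A n) / real n) \<le> ereal (\<beta> + K / real n)"
      by simp
  qed
  then have "upper_density A \<le> limsup (\<lambda>n. ereal (\<beta> + K / real n))"
    unfolding upper_density_def by (rule Limsup_mono)
  also have "\<dots> = ereal \<beta>"
  proof (rule lim_imp_Limsup)
    have "(\<lambda>n. \<beta> + K / real n) \<longlonglongrightarrow> \<beta> + 0"
      by (intro tendsto_add tendsto_const lim_const_over_n)
    then show "(\<lambda>n. ereal (\<beta> + K / real n)) \<longlonglongrightarrow> ereal \<beta>"
      by simp
  qed simp
  finally show ?thesis .
qed

lemma counting_le_linear_if_recursion:
  fixes P :: nat and a C \<epsilon> :: real
  assumes "1 < P" "0 \<le> a" "0 < \<epsilon>"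
    and rec: "\<And>n. real (counting A n) \<le> real (counting A (n div P)) + a * real n + C"
  defines "\<beta> \<equiv> a * P / (real P - 1) + \<epsilon>"
  obtains K where "\<And>n. real (counting A n) \<le> \<beta> * real n + K"
proof
  define N where "N = C * P / (\<epsilon> * (real P - 1))"
  have "0 \<le> \<beta>"
    using assms(1-3) by (simp add: \<beta>_def)
  have "\<beta> * (real P - 1) = a * P + \<epsilon> * (real P - 1)"
    using assms(1) unfolding \<beta>_def by (simp add: distrib_right)
  then have scaled: "\<beta> * real n - \<beta> * (real n / P) - a * real n = \<epsilon> * (real P - 1) / P * real n"
    for n
    using assms(1) by (simp add: field_simps) algebra
  \<comment> \<open>The slack \<epsilon> (P - 1)/P n of the recursion absorbs the constant C once n exceeds N.\<close>
  have gain: "\<beta> * (real n / P) + a * real n + C \<le> \<beta> * real n" if "N < real n" for n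
  proof -
    have "C < \<epsilon> * (real P - 1) / P * real n"
      using that assms(1,3) by (simp add: N_def field_simps)
    then show ?thesis
      using scaled[of n] by linarith
  qed
  show "real (counting A n) \<le> \<beta> * real n + (max N 0 + 1)" for n
  proof (induction n rule: less_induct)
    case (less n)
    show ?case
    proof (cases "n = 0 \<or> real n \<le> N")
      case True
      then have "real (counting A n) \<le> max N 0 + 1"
        using counting_le[of A n] by (auto simp: max_def)
      then show ?thesis
        using \<open>0 \<le> \<beta>\<close> by (simp add: add_increasing)
    next
      case False
      then have "n div P < n"
        using assms(1) by simp
      then have "real (counting A (n div P)) \<le> \<beta> * real (n div P) + (max N 0 + 1)"
        by (rule less)
      moreover have "\<beta> * real (n div P) \<le> \<beta> * (real n / P)"
        using \<open>0 \<le> \<beta>\<close> by (intro mult_left_mono of_nat_div_le_of_nat)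
      ultimately show ?thesis
        using rec[of n] gain[of n] False by linarith
    qed
  qed
qed

lemma upper_density_le_if_counting_recursion:
  fixes P :: nat and a C :: real
  assumes "1 < P" "0 \<le> a"
    and "\<And>n. real (counting A n) \<le> real (counting A (n div P)) + a * real n + C"
  shows "upper_density A \<le> ereal (a * P / (real P - 1))"
proof (rule ereal_le_epsilon2)
  fix \<epsilon> :: real assume "0 < \<epsilon>"
  obtain K where "\<And>n. real (counting A n) \<le> (a * P / (real P - 1) + \<epsilon>) * real n + K"
    using counting_le_linear_if_recursion[OF assms(1,2) \<open>0 < \<epsilon>\<close> assms(3)] by blast
  then have "upper_density A \<le> ereal (a * P / (real P - 1) + \<epsilon>)"
    by (rule upper_density_le_if_counting_le_linear)
  then show "upper_density A \<le> ereal (a * P / (real P - 1)) + ereal \<epsilon>"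
    by simp
qed

section \<open>Finite geometric progressions of integers\<close>

definition gp_set :: "nat \<Rightarrow> nat \<Rightarrow> nat \<Rightarrow> nat \<Rightarrow> nat set" where
  "gp_set k p q m = {m * p ^ (k - 1 - i) * q ^ i | i. i < k}"

lemma gp_set_swap: "gp_set k p q m = gp_set k q p m"
proof -
  have "gp_set k p q m \<subseteq> gp_set k q p m" for p q
  proof
    fix y assume "y \<in> gp_set k p q m"
    then obtain i where "i < k" "y = m * p ^ (k - 1 - i) * q ^ i"
      by (auto simp: gp_set_def)
    then have "k - 1 - i < k" "y = m * q ^ (k - 1 - (k - 1 - i)) * p ^ (k - 1 - i)"
      by (simp_all add: mult_ac)
    then show "y \<in> gp_set k q p m"
      unfolding gp_set_def by blast
  qed
  then show ?thesis by blast
qed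

lemma gp_set_last: "0 < k \<Longrightarrow> m * q ^ (k - 1) \<in> gp_set k p q m"
  unfolding gp_set_def by (rule CollectI, rule exI[of _ "k - 1"]) simp

lemma gp_set_bounds:
  assumes "p \<le> q" "y \<in> gp_set k p q m"
  shows "m * p ^ (k - 1) \<le> y \<and> y \<le> m * q ^ (k - 1)"
proof -
  obtain i where i: "i < k" "y = m * (p ^ (k - 1 - i) * q ^ i)"
    using assms(2) by (auto simp: gp_set_def mult.assoc)
  have split: "x ^ (k - 1) = x ^ (k - 1 - i) * x ^ i" for x :: nat
    using i(1) by (simp flip: power_add)
  have "p ^ (k - 1) \<le> p ^ (k - 1 - i) * q ^ i"
    unfolding split[of p] using assms(1) by (simp add: power_mono)
  moreover have "p ^ (k - 1 - i) * q ^ i \<le> q ^ (k - 1)"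
    unfolding split[of q] using assms(1) by (simp add: power_mono)
  ultimately show ?thesis
    using i(2) by simp
qed

lemma gp_set_not_subset_if_no_k_GP:
  assumes "no_k_GP k A" "0 < p" "p < q" "0 < m"
  shows "\<not> gp_set k p q m \<subseteq> A"
proof
  assume sub: "gp_set k p q m \<subseteq> A"
  define r where "r = real q / real p"
  define a where "a i = real m * real p ^ (k - 1) * r ^ i" for i
  have a_nat: "a i = real (m * p ^ (k - 1 - i) * q ^ i)" if "i < k" for i
  proof -
    have "real p ^ (k - 1) * r ^ i = real p ^ (k - 1 - i) * (real p ^ i * r ^ i)"
      using that by (simp add: mult.assoc flip: power_add)
    also have "real p ^ i * r ^ i = real q ^ i"
      using assms(2) by (simp add: r_def power_divide)
    finally show ?thesis
      by (simp add: a_def mult.assoc)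
  qed
  have "r \<noteq> 0" "r \<noteq> 1" "r \<noteq> -1"
    using assms(2,3) by (auto simp: r_def field_simps)
  moreover have "a i \<noteq> 0" for i
    using assms \<open>r \<noteq> 0\<close> by (simp add: a_def)
  moreover have "a i / a (i - 1) = r" if "1 \<le> i" for i
  proof -
    have "a i = a (i - 1) * r"
      using that by (simp add: a_def mult.assoc flip: power_Suc2)
    then show ?thesis using \<open>a (i - 1) \<noteq> 0\<close> by simp
  qed
  ultimately have "geom_prog k r a"
    by (simp add: geom_prog_def)
  moreover have "\<exists>x\<in>A. a i = real x" if "i < k" for i
  proof
    show "m * p ^ (k - 1 - i) * q ^ i \<in> A"
      using sub that unfolding gp_set_def by blast
  qed (rule a_nat[OF that])
  ultimately show False
    using assms(1) unfolding no_k_GP_def by blast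
qed

lemma prime_not_dvd_gp_set:
  assumes "prime s" "\<not> s dvd p" "\<not> s dvd q" "\<not> s dvd m" "y \<in> gp_set k p q m"
  shows "\<not> s dvd y"
  using assms by (auto simp: gp_set_def prime_dvd_mult_iff dest: prime_dvd_power)

lemma gp_set_eq_last_if_not_dvd:
  assumes "prime p" "\<not> p dvd y" "y \<in> gp_set k p q m"
  shows "y = m * q ^ (k - 1)"
proof -
  obtain i where i: "i < k" "y = m * p ^ (k - 1 - i) * q ^ i"
    using assms(3) by (auto simp: gp_set_def)
  have "k - 1 - i = 0"
    using assms(2) i(2) by (cases "k - 1 - i") auto
  then have "i = k - 1"
    using i(1) by simp
  then show ?thesis
    using i(2) by simp
qed

lemma multiplicity_times_prime_power:
  fixes s a :: nat
  assumes "prime s" "\<not> s dvd a"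
  shows "multiplicity s (a * s ^ i) = i"
proof -
  have "a \<noteq> 0" using assms(2) by (metis dvd_0_right)
  then show ?thesis
    using assms by (simp add: prime_elem_multiplicity_mult_distrib not_dvd_imp_multiplicity_0)
qed

lemma gp_set_inj_if_prime_ratio:
  assumes "prime q" "\<not> q dvd p" "\<not> q dvd m" "\<not> q dvd m'"
    and "y \<in> gp_set k p q m" "y \<in> gp_set k p q m'"
  shows "m = m'"
proof -
  obtain i where i: "y = (m * p ^ (k - 1 - i)) * q ^ i"
    using assms(5) by (auto simp: gp_set_def)
  obtain j where j: "y = (m' * p ^ (k - 1 - j)) * q ^ j"
    using assms(6) by (auto simp: gp_set_def)
  have "\<not> q dvd m * p ^ (k - 1 - i)" "\<not> q dvd m' * p ^ (k - 1 - j)"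
    using assms(1-4) by (auto simp: prime_dvd_mult_iff dest: prime_dvd_power)
  then have "multiplicity q y = i" "multiplicity q y = j"
    by (subst i j, simp add: multiplicity_times_prime_power assms(1))+
  moreover have "p \<noteq> 0"
    using assms(2) by (metis dvd_0_right)
  ultimately show ?thesis
    using i j assms(1) by (simp add: prime_gt_0_nat)
qed

lemma gp_set_one_inj:
  assumes "y \<in> gp_set k 1 q m" "y \<in> gp_set k 1 q m'" "m < q * m'" "m' < q * m"
  shows "m = m'"
proof -
  have less: False if "y = a * q ^ i" "y = b * q ^ j" "i < j" "a < q * b" for a b i j
  proof -
    have "q \<noteq> 0" using that(4) by (cases q) auto
    have "a * q ^ i = (b * q ^ (j - i)) * q ^ i"
      using that(1-3) by (simp add: mult.assoc flip: power_add)
    then have "a = b * q ^ (j - i)"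
      using \<open>q \<noteq> 0\<close> by simp
    moreover have "q \<le> q ^ (j - i)"
      using \<open>q \<noteq> 0\<close> that(3) by (simp add: self_le_power)
    ultimately show False
      using that(4) by (metis mult.commute mult_le_mono2 not_le)
  qed
  obtain i where i: "y = m * q ^ i"
    using assms(1) by (auto simp: gp_set_def)
  obtain j where j: "y = m' * q ^ j"
    using assms(2) by (auto simp: gp_set_def)
  have "i = j"
    using less[OF i j] less[OF j i] assms(3,4) by (metis linorder_neqE_nat)
  then show ?thesis
    using i j assms(3) by auto
qed

lemma gp_set_two_inj:
  assumes "0 < k" "y \<in> gp_set k 1 2 m" "y \<in> gp_set k 1 2 m'"
    and "n < 2 ^ k * m" "2 ^ (k - 1) * m \<le> n" "n < 2 ^ k * m'" "2 ^ (k - 1) * m' \<le> n"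
  shows "m = m'"
proof -
  have less_double: "l < 2 * l'" if "2 ^ (k - 1) * l \<le> n" "n < 2 ^ k * l'" for l l' :: nat
  proof -
    have "(2::nat) ^ k = 2 ^ (k - 1) * 2"
      using assms(1) by (cases k) auto
    then have "2 ^ (k - 1) * l < 2 ^ (k - 1) * (2 * l')"
      using that by (metis le_less_trans mult.assoc mult.commute)
    then show ?thesis by simp
  qed
  show ?thesis
    using assms(4-7) by (intro gp_set_one_inj[OF assms(2,3)] less_double)
qed

lemma gp_set_two_odd_disjoint:
  assumes "0 < k" "odd p" "odd q" "odd m'" "p \<le> q"
    and "2 ^ (k - 1) * m \<le> n" "n < (2 * p) ^ (k - 1) * m'"
  shows "gp_set k 1 2 m \<inter> gp_set k p q m' = {}"
proof (rule ccontr)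
  assume "gp_set k 1 2 m \<inter> gp_set k p q m' \<noteq> {}"
  then obtain y where y: "y \<in> gp_set k 2 1 m" "y \<in> gp_set k p q m'"
    by (auto simp: gp_set_swap)
  have "odd y"
    using prime_not_dvd_gp_set[OF two_is_prime_nat _ _ _ y(2)] assms(2-4) by blast
  then have "y = m"
    using gp_set_eq_last_if_not_dvd[OF two_is_prime_nat _ y(1)] by simp
  then have "m' * p ^ (k - 1) \<le> m"
    using gp_set_bounds[OF assms(5) y(2)] by simp
  then have "(2 * p) ^ (k - 1) * m' \<le> 2 ^ (k - 1) * m"
    by (simp add: power_mult_distrib mult_ac)
  then show False
    using assms(6,7) by linarith
qed

lemma gp_set_five_thirds_seven_fifths_disjoint:
  assumes "0 < k" "\<not> 5 dvd m" "\<not> 3 dvd m'" "\<not> 5 dvd m'"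
    and "n < 6 ^ (k - 1) * m" "7 ^ (k - 1) * m' \<le> n"
  shows "gp_set k 3 5 m \<inter> gp_set k 5 7 m' = {}"
proof (rule ccontr)
  assume "gp_set k 3 5 m \<inter> gp_set k 5 7 m' \<noteq> {}"
  then obtain y where y: "y \<in> gp_set k 3 5 m" "y \<in> gp_set k 7 5 m'"
    by (auto simp: gp_set_swap[of k 5 7])
  have "\<not> 3 dvd y"
    using prime_not_dvd_gp_set[of 3 7 5 m' y k] y(2) assms(3) by simp
  then have "y = m * 5 ^ (k - 1)"
    using gp_set_eq_last_if_not_dvd[of 3 y k 5 m] y(1) by simp
  then have "y \<in> gp_set k 7 5 m"
    using gp_set_last[OF assms(1)] by simp
  then have "m = m'"
    using gp_set_inj_if_prime_ratio[of 5 7 m m' y k] y(2) assms(2,4) by simp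
  then have "7 ^ (k - 1) * m < 6 ^ (k - 1) * m"
    using assms(5,6) by (metis le_less_trans)
  moreover have "6 ^ (k - 1) * m \<le> 7 ^ (k - 1) * m"
    by (simp add: power_mono)
  ultimately show False
    by linarith
qed

section \<open>Disjoint progressions in (n/2^k, n]\<close>

lemma card_le_card_diff_if_disjoint_family:
  assumes "finite T" "disjoint_family_on G I"
    and "\<And>x. x \<in> I \<Longrightarrow> G x \<subseteq> T" "\<And>x. x \<in> I \<Longrightarrow> \<not> G x \<subseteq> A"
  shows "card I \<le> card (T - A)"
proof -
  define h where "h x = (SOME y. y \<in> G x - A)" for x
  have h: "h x \<in> G x - A" if "x \<in> I" for x
    unfolding h_def using assms(4)[OF that] by (metis Diff_eq_empty_iff ex_in_conv someI)
  have "inj_on h I"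
    using h assms(2) by (fastforce simp: inj_on_def disjoint_family_on_def)
  moreover have "h ` I \<subseteq> T - A"
    using h assms(3) by blast
  ultimately show ?thesis
    using assms(1) by (intro card_inj_on_le) auto
qed

text \<open>A triple (p, q, m) stands for the progression gp_set k p q m. The lower ends
  6^(k-1) = (2*3)^(k-1) and 10^(k-1) = (2*5)^(k-1) keep the odd-ratio progressions above n/2^(k-1),
  where the ratio-2 progressions have no odd member.\<close>

definition gp_blocks :: "nat \<Rightarrow> nat \<Rightarrow> (nat \<times> nat \<times> nat) set" where
  "gp_blocks k n =
     (\<lambda>m. (1, 2, m)) ` coprime_window 1 (2 ^ k) (2 ^ (k - 1)) n \<union>
     (\<lambda>m. (3, 5, m)) ` coprime_window 10 (6 ^ (k - 1)) (5 ^ (k - 1)) n \<union>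
     (\<lambda>m. (5, 7, m)) ` coprime_window 30 (10 ^ (k - 1)) (7 ^ (k - 1)) n"

lemma gp_blocks_cases:
  assumes "x \<in> gp_blocks k n"
  obtains (two) m where "x = (1, 2, m)" "n < 2 ^ k * m" "2 ^ (k - 1) * m \<le> n"
  | (five_thirds) m where "x = (3, 5, m)" "odd m" "\<not> 5 dvd m"
      "n < 6 ^ (k - 1) * m" "5 ^ (k - 1) * m \<le> n"
  | (seven_fifths) m where "x = (5, 7, m)" "odd m" "\<not> 3 dvd m" "\<not> 5 dvd m"
      "n < 10 ^ (k - 1) * m" "7 ^ (k - 1) * m \<le> n"
proof -
  have not_dvd: "\<not> p dvd m" if "coprime m c" "p dvd c" "prime p" for m c p :: nat
    using that by (meson coprime_common_divisor not_prime_unit)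
  show ?thesis
    using assms not_dvd[of _ 10 2] not_dvd[of _ 10 5] not_dvd[of _ 30 2] not_dvd[of _ 30 3]
      not_dvd[of _ 30 5] that
    unfolding gp_blocks_def coprime_window_def by auto
qed

lemma gp_blocks_bounds:
  assumes "0 < k" "(p, q, m) \<in> gp_blocks k n"
  shows "0 < p \<and> p < q \<and> n < 2 ^ k * (m * p ^ (k - 1)) \<and> m * q ^ (k - 1) \<le> n"
proof -
  have pow2: "(2::nat) ^ k = 2 * 2 ^ (k - 1)"
    using assms(1) by (cases k) auto
  have "(6::nat) ^ (k - 1) = 2 ^ (k - 1) * 3 ^ (k - 1)" "(10::nat) ^ (k - 1) = 2 ^ (k - 1) * 5 ^ (k - 1)"
    by (simp_all flip: power_mult_distrib)
  with assms(2) show ?thesis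
    by (cases rule: gp_blocks_cases) (auto simp: pow2 mult_ac)
qed

lemma gp_blocks_disjoint:
  assumes "0 < k"
  shows "disjoint_family_on (\<lambda>(p, q, m). gp_set k p q m) (gp_blocks k n)"
  unfolding disjoint_family_on_def
proof (intro ballI impI)
  fix x x' assume "x \<in> gp_blocks k n" "x' \<in> gp_blocks k n" "x \<noteq> x'"
  note two_inj = gp_set_two_inj[OF assms]
  note five_thirds_inj = gp_set_inj_if_prime_ratio[of 5 3 _ _ _ k, simplified]
  note seven_fifths_inj = gp_set_inj_if_prime_ratio[of 5 7 _ _ _ k, simplified, folded gp_set_swap]
  note two_five_thirds = gp_set_two_odd_disjoint[OF assms, of 3 5, simplified]
  note two_seven_fifths = gp_set_two_odd_disjoint[OF assms, of 5 7, simplified]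
  note five_thirds_seven_fifths = gp_set_five_thirds_seven_fifths_disjoint[OF assms]
  show "(\<lambda>(p, q, m). gp_set k p q m) x \<inter> (\<lambda>(p, q, m). gp_set k p q m) x' = {}"
    using \<open>x \<in> _\<close>
  proof (cases rule: gp_blocks_cases)
    case (two m)
    note x_def = this
    from \<open>x' \<in> _\<close> show ?thesis
      by (cases rule: gp_blocks_cases)
        (use x_def \<open>x \<noteq> x'\<close> two_inj two_five_thirds two_seven_fifths in auto)
  next
    case (five_thirds m)
    note x_def = this
    from \<open>x' \<in> _\<close> show ?thesis
      by (cases rule: gp_blocks_cases)
        (use x_def \<open>x \<noteq> x'\<close> five_thirds_inj two_five_thirds five_thirds_seven_fifths
          in \<open>auto simp: Int_commute\<close>)
  next
    case (seven_fifths m)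
    note x_def = this
    from \<open>x' \<in> _\<close> show ?thesis
      by (cases rule: gp_blocks_cases)
        (use x_def \<open>x \<noteq> x'\<close> seven_fifths_inj two_seven_fifths five_thirds_seven_fifths
          in \<open>auto simp: Int_commute\<close>)
  qed
qed

lemma card_gp_blocks:
  "card (gp_blocks k n) = card (coprime_window 1 (2 ^ k) (2 ^ (k - 1)) n)
     + card (coprime_window 10 (6 ^ (k - 1)) (5 ^ (k - 1)) n)
     + card (coprime_window 30 (10 ^ (k - 1)) (7 ^ (k - 1)) n)"
proof -
  have finite: "finite (coprime_window q c d n)" if "0 < d" for q c d :: nat
  proof (rule finite_subset[of _ "{..n}"])
    show "coprime_window q c d n \<subseteq> {..n}"
    proof
      fix m assume "m \<in> coprime_window q c d n"
      then have "d * m \<le> n"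
        by (simp add: coprime_window_def)
      moreover have "m \<le> d * m"
        using that by (simp add: Suc_le_eq)
      ultimately have "m \<le> n"
        by linarith
      then show "m \<in> {..n}"
        by simp
    qed
  qed simp
  define tag where "tag p q W = (\<lambda>m::nat. (p, q, m)) ` W" for p q :: nat and W
  have card_tag: "card (tag p q W) = card W" for p q W
    unfolding tag_def by (rule card_image) (simp add: inj_on_def)
  have finite_tag: "finite (tag p q W) \<longleftrightarrow> finite W" for p q W
    unfolding tag_def by (simp add: finite_image_iff inj_on_def)
  have "card (tag 1 2 W1 \<union> tag 3 5 W2 \<union> tag 5 7 W3) = card W1 + card W2 + card W3"
    if "finite W1" "finite W2" "finite W3" for W1 W2 W3
  proof -
    have "tag 1 2 W1 \<inter> tag 3 5 W2 = {}" "(tag 1 2 W1 \<union> tag 3 5 W2) \<inter> tag 5 7 W3 = {}"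
      by (auto simp: tag_def)
    then show ?thesis
      using that by (simp add: card_Un_disjoint card_tag finite_tag)
  qed
  then show ?thesis
    unfolding gp_blocks_def tag_def[symmetric] by (simp add: finite)
qed

lemma card_gp_blocks_ge:
  assumes "0 < k"
  shows "real n / 2 ^ k + 2/5 * (real n / 5 ^ (k - 1) - real n / 6 ^ (k - 1))
      + 4/15 * (real n / 7 ^ (k - 1) - real n / 10 ^ (k - 1)) - 39 \<le> card (gp_blocks k n)"
proof -
  have "real n / 2 ^ (k - 1) - real n / 2 ^ k = real n / 2 ^ k"
    using assms by (cases k) (simp_all add: field_simps)
  then have "real n / 2 ^ k - 3 \<le> card (coprime_window 1 (2 ^ k) (2 ^ (k - 1)) n)"
    using card_coprime_window_ge[of 1 "2 ^ k" "2 ^ (k - 1)" n] by simp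
  moreover have "2/5 * (real n / 5 ^ (k - 1) - real n / 6 ^ (k - 1)) - 12
      \<le> card (coprime_window 10 (6 ^ (k - 1)) (5 ^ (k - 1)) n)"
    using card_coprime_window_ge[of 10 "6 ^ (k - 1)" "5 ^ (k - 1)" n]
      totient_mult_coprime[of 2 5] by (simp add: field_simps)
  moreover have "4/15 * (real n / 7 ^ (k - 1) - real n / 10 ^ (k - 1)) - 24
      \<le> card (coprime_window 30 (10 ^ (k - 1)) (7 ^ (k - 1)) n)"
    using card_coprime_window_ge[of 30 "10 ^ (k - 1)" "7 ^ (k - 1)" n]
      totient_mult_coprime[of 2 15] totient_mult_coprime[of 3 5] primes_coprime[of "3::nat" 5]
    by (simp add: field_simps)
  ultimately show ?thesis
    unfolding card_gp_blocks by linarith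
qed

lemma counting_add_card_gp_blocks_le:
  assumes "0 < k" "no_k_GP k A"
  shows "counting A n + card (gp_blocks k n) \<le> counting A (n div 2 ^ k) + (n - n div 2 ^ k)"
proof -
  let ?T = "{n div 2 ^ k<..n}"
  have "card (gp_blocks k n) \<le> card (?T - A)"
  proof (rule card_le_card_diff_if_disjoint_family[OF _ gp_blocks_disjoint[OF assms(1)]])
    fix x assume "x \<in> gp_blocks k n"
    then obtain p q m where x: "x = (p, q, m)" "(p, q, m) \<in> gp_blocks k n"
      by (metis prod_cases3)
    note bounds = gp_blocks_bounds[OF assms(1) x(2)]
    have "gp_set k p q m \<subseteq> ?T"
    proof
      fix y assume "y \<in> gp_set k p q m"
      with bounds have "n < 2 ^ k * y" "y \<le> n"
        using gp_set_bounds[of p q y k m] by (auto intro: less_le_trans)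
      then show "y \<in> ?T"
        by (simp add: div_less_iff_less_mult mult.commute)
    qed
    moreover have "\<not> gp_set k p q m \<subseteq> A"
      using bounds by (intro gp_set_not_subset_if_no_k_GP[OF assms(2)]) (auto intro: gr0I)
    ultimately show "(\<lambda>(p, q, m). gp_set k p q m) x \<subseteq> ?T"
      "\<not> (\<lambda>(p, q, m). gp_set k p q m) x \<subseteq> A"
      using x by auto
  qed simp
  moreover have "card (?T - A) = (n - n div 2 ^ k) - card (A \<inter> ?T)"
    by (simp add: card_Diff_subset_Int Int_commute)
  moreover have "card (A \<inter> ?T) \<le> n - n div 2 ^ k"
    using card_mono[of ?T "A \<inter> ?T"] by simp
  ultimately show ?thesis
    using counting_div_split[of A n "2 ^ k"] by linarith
qed

text \<open>The constants 4/10 and 8/30 are the densities totient 10 / 10 and totient 30 / 30.\<close>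

definition odd_blocks_density :: "nat \<Rightarrow> real" where
  "odd_blocks_density k =
     2/5 * (1 / 5 ^ (k - 1) - 1 / 6 ^ (k - 1)) + 4/15 * (1 / 7 ^ (k - 1) - 1 / 10 ^ (k - 1))"

lemma odd_blocks_density_bounds: "0 \<le> odd_blocks_density k \<and> odd_blocks_density k \<le> 2/3"
proof -
  have bounds: "0 \<le> 2/5 * (u - v) + 4/15 * (w - z) \<and> 2/5 * (u - v) + 4/15 * (w - z) \<le> 2/3"
    if "v \<le> u" "z \<le> w" "u \<le> 1" "w \<le> 1" "0 \<le> v" "0 \<le> z" for u v w z :: real
    using that by (simp add: field_simps)
  have "(1::real) / 6 ^ (k - 1) \<le> 1 / 5 ^ (k - 1)" "(1::real) / 10 ^ (k - 1) \<le> 1 / 7 ^ (k - 1)"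
    by (intro divide_left_mono power_mono; simp)+
  moreover have "(1::real) / 5 ^ (k - 1) \<le> 1" "(1::real) / 7 ^ (k - 1) \<le> 1"
    "(0::real) \<le> 1 / 6 ^ (k - 1)" "(0::real) \<le> 1 / 10 ^ (k - 1)"
    by simp_all
  ultimately show ?thesis
    unfolding odd_blocks_density_def by (rule bounds)
qed

lemma recursion_density_le:
  fixes x E :: real
  assumes "1 < x" "0 \<le> E"
  shows "(1 - 2 / x - E) * x / (x - 1) \<le> 1 - 1 / (x - 1) - E"
proof -
  define y where "y = x - 1"
  have "0 < y" "x = y + 1"
    using assms(1) by (simp_all add: y_def)
  then have "(1 - 2 / x - E) * x = y - 1 - E * y - E"
    by (simp add: field_simps)
  moreover have "(y - 1 - E * y - E) / y = 1 - 1 / y - E - E / y"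
    using \<open>0 < y\<close> by (simp add: field_simps)
  moreover have "0 \<le> E / y"
    using \<open>0 < y\<close> assms(2) by simp
  ultimately show ?thesis
    unfolding y_def by simp
qed

lemma counting_recursion:
  assumes "0 < k" "no_k_GP k A"
  shows "real (counting A n)
    \<le> real (counting A (n div 2 ^ k)) + (1 - 2 / 2 ^ k - odd_blocks_density k) * real n + 40"
proof -
  have "real (counting A n) + card (gp_blocks k n)
      \<le> real (counting A (n div 2 ^ k)) + real (n - n div 2 ^ k)"
    using counting_add_card_gp_blocks_le[OF assms, of n] by linarith
  moreover have "real (n - n div 2 ^ k) \<le> real n - real n / 2 ^ k + 1"
    using of_nat_div_ge[of n "2 ^ k"] by (simp add: of_nat_diff)
  moreover note card_gp_blocks_ge[OF assms(1), of n]
  moreover have "(1 - 2 / 2 ^ k - odd_blocks_density k) * real n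
      = real n - 2 * (real n / 2 ^ k) - (2/5 * (real n / 5 ^ (k - 1) - real n / 6 ^ (k - 1))
         + 4/15 * (real n / 7 ^ (k - 1) - real n / 10 ^ (k - 1)))"
    by (simp add: odd_blocks_density_def algebra_simps)
  ultimately show ?thesis
    by linarith
qed

theorem corollary1:
  fixes k :: nat and A :: "nat set"
  assumes "k \<ge> 3"
    and "\<forall>a\<in>A. a > 0"
    and "no_k_GP k A"
  shows "upper_density A \<le> ereal (1 - 1 / (2 ^ k - 1)
            - 2/5 * (1 / 5 ^ (k - 1) - 1 / 6 ^ (k - 1))
            - 4/15 * (1 / 7 ^ (k - 1) - 1 / 10 ^ (k - 1)))"
proof -
  define E where "E = odd_blocks_density k"
  define a where "a = 1 - 2 / 2 ^ k - E"
  have "0 \<le> E" "E \<le> 2/3"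
    using odd_blocks_density_bounds[of k] by (simp_all add: E_def)
  have "(8::real) \<le> 2 ^ k"
    using power_increasing[of 3 k "2::real"] assms(1) by simp
  then have "2 / 2 ^ k \<le> (1::real) / 4"
    by (simp add: field_simps)
  then have "0 \<le> a"
    using \<open>E \<le> 2/3\<close> unfolding a_def by linarith
  have "real (counting A n) \<le> real (counting A (n div 2 ^ k)) + a * real n + 40" for n
    unfolding a_def E_def by (rule counting_recursion) (use assms(1,3) in auto)
  moreover have "1 < (2::nat) ^ k"
    using assms(1) by (intro one_less_power) auto
  ultimately have "upper_density A \<le> ereal (a * 2 ^ k / (2 ^ k - 1))"
    using upper_density_le_if_counting_recursion[of "2 ^ k" a A 40] \<open>0 \<le> a\<close> by simp
  also have "\<dots> \<le> ereal (1 - 1 / (2 ^ k - 1) - E)"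
    using recursion_density_le[of "2 ^ k" E] \<open>8 \<le> 2 ^ k\<close> \<open>0 \<le> E\<close> by (simp add: a_def)
  finally show ?thesis
    by (simp add: E_def odd_blocks_density_def diff_diff_eq add.assoc)
qed

end
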